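(* Let $n\ge1$ and suppose $\alpha\in(0,n+2)$ and $\beta\in[0,n+2)$ are constants. Then $$\iint_{\mathbb{R}^n\times(0,t)}\Phi(x-y,t-s)^{\alpha/n}\Phi(y-z,s)^{\beta/n}\,dy\,ds\le\frac{C}{\sqrt t^{\,\alpha+\beta-(n+2)}}$$ for all $x,z\in\mathbb{R}^n$ and $t>0$, where $C=C(n,\alpha,\beta)>0$.
   Context: $\Phi$ is the heat kernel: $\Phi(x,t)=(4\pi t)^{-n/2}e^{-|x|^2/(4t)}$ for $t>0$ and $\Phi(x,t)=0$ for $t\le0$; $\Phi^0$ is interpreted as the constant $1$ when $\beta=0$. *)

theory Defs
  imports "HOL-Analysis.Analysis"
begin

definition heat_kernel :: "real^'n \<Rightarrow> real \<Rightarrow> real" where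
  "heat_kernel x t = (if t > 0
     then (4 * pi * t) powr (- real CARD('n) / 2) * exp (- (norm x)\<^sup>2 / (4 * t))
     else 0)"

end

theory Submission
  imports Defs "HOL-Probability.Probability"
begin

text \<open>Split the time interval at \<open>t/2\<close>. For \<open>s \<ge> t/2\<close> the factor \<open>\<Phi>(y - z, s)\<^bsup>\<beta>/n\<^esup>\<close> is
  bounded by \<open>(2\<pi>t)\<^bsup>-\<beta>/2\<^esup>\<close>, and the remaining factor \<open>\<Phi>(x - y, t - s)\<^bsup>\<alpha>/n\<^esup>\<close> is a
  Gaussian in \<open>y\<close> whose integral is a constant multiple of \<open>(t - s)\<^bsup>(n-\<alpha>)/2\<^esup>\<close>; for \<open>s < t/2\<close> the roles of the two
  factors are exchanged (when \<open>\<beta> = 0\<close> the second factor is \<open>1\<close>, which is not integrable in \<open>y\<close>,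
  so the first bound is used on all of \<open>(0, t)\<close>). Since \<open>\<alpha>, \<beta> < n + 2\<close>, the powers of
  \<open>t - s\<close> and \<open>s\<close> are integrable on \<open>(0, t)\<close>, and every term scales like
  \<open>t\<^bsup>(n+2-\<alpha>-\<beta>)/2\<^esup>\<close>.\<close>

lemma nn_integral_exp_neg_mult_square:
  fixes c :: real
  assumes "c > 0"
  shows "(\<integral>\<^sup>+u. ennreal (exp (- c * u\<^sup>2)) \<partial>lborel) = ennreal (sqrt (pi / c))"
proof -
  define \<sigma> where "\<sigma> = sqrt (1 / (2 * c))"
  have \<sigma>: "\<sigma> > 0" "\<sigma>\<^sup>2 = 1 / (2 * c)"
    using assms by (simp_all add: \<sigma>_def)
  have density: "exp (- c * u\<^sup>2) = sqrt (pi / c) * normal_density 0 \<sigma> u" for u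
  proof -
    have "2 * pi * \<sigma>\<^sup>2 = pi / c"
      using \<sigma>(2) assms by (simp add: field_simps)
    moreover have "- (u - 0)\<^sup>2 / (2 * \<sigma>\<^sup>2) = - c * u\<^sup>2"
      unfolding \<sigma>(2) using assms by (simp add: field_simps)
    ultimately show ?thesis
      using assms by (simp add: normal_density_def)
  qed
  have "(\<integral>\<^sup>+u. ennreal (exp (- c * u\<^sup>2)) \<partial>lborel)
      = ennreal (sqrt (pi / c)) * (\<integral>\<^sup>+u. ennreal (normal_density 0 \<sigma> u) \<partial>lborel)"
    unfolding density using assms
    by (subst nn_integral_cmult[symmetric]) (auto simp: ennreal_mult)
  also have "(\<integral>\<^sup>+u. ennreal (normal_density 0 \<sigma> u) \<partial>lborel) = 1"
    using \<sigma> by (subst nn_integral_eq_integral)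
      (auto intro!: integrable_normal_density integral_normal_density)
  finally show ?thesis by simp
qed

lemma nn_integral_exp_neg_mult_norm_square:
  fixes c :: real
  assumes "c > 0"
  shows "(\<integral>\<^sup>+y. ennreal (exp (- c * (norm (y::'a::euclidean_space))\<^sup>2)) \<partial>lborel)
     = ennreal (sqrt (pi / c) ^ DIM('a))"
proof -
  have "(\<lambda>y::'a. ennreal (exp (- c * (norm y)\<^sup>2)))
      = (\<lambda>y. \<Prod>b\<in>Basis. ennreal (exp (- c * (y \<bullet> b)\<^sup>2)))"
  proof
    fix y :: 'a
    have "(norm y)\<^sup>2 = y \<bullet> y"
      by (rule power2_norm_eq_inner)
    also have "\<dots> = (\<Sum>b\<in>Basis. (y \<bullet> b)\<^sup>2)"
      by (subst euclidean_inner) (simp add: power2_eq_square)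
    finally have "exp (- c * (norm y)\<^sup>2) = (\<Prod>b\<in>Basis. exp (- c * (y \<bullet> b)\<^sup>2))"
      by (simp add: sum_distrib_left exp_sum[symmetric] sum_negf)
    then show "ennreal (exp (- c * (norm y)\<^sup>2)) = (\<Prod>b\<in>Basis. ennreal (exp (- c * (y \<bullet> b)\<^sup>2)))"
      by (simp add: prod_ennreal)
  qed
  then have "(\<integral>\<^sup>+y. ennreal (exp (- c * (norm (y::'a))\<^sup>2)) \<partial>lborel)
      = (\<Prod>b\<in>(Basis::'a set). (\<integral>\<^sup>+u. ennreal (exp (- c * u\<^sup>2)) \<partial>lborel))"
    by (simp only:) (rule nn_integral_lborel_prod; simp)
  also have "\<dots> = ennreal (sqrt (pi / c)) ^ DIM('a)"
    using nn_integral_exp_neg_mult_square[OF assms] by simp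
  finally show ?thesis
    using assms by (simp add: ennreal_power)
qed

lemma nn_integral_lborel_translate:
  fixes f :: "'a::euclidean_space \<Rightarrow> ennreal"
  assumes [measurable]: "f \<in> borel_measurable borel"
  shows "(\<integral>\<^sup>+y. f (y - z) \<partial>lborel) = (\<integral>\<^sup>+y. f y \<partial>lborel)"
proof -
  have "(\<integral>\<^sup>+y. f y \<partial>lborel) = (\<integral>\<^sup>+y. f y \<partial>distr lborel borel ((+) (- z)))"
    by (simp add: lborel_distr_plus)
  then show ?thesis
    by (simp add: nn_integral_distr)
qed

lemma nn_integral_lborel_times_set:
  fixes f :: "'a::euclidean_space \<times> 'b::euclidean_space \<Rightarrow> ennreal"
  assumes [measurable]: "f \<in> borel_measurable (borel \<Otimes>\<^sub>M borel)" "B \<in> sets borel"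
  shows "(\<integral>\<^sup>+p \<in> UNIV \<times> B. f p \<partial>lborel) = (\<integral>\<^sup>+s \<in> B. (\<integral>\<^sup>+y. f (y, s) \<partial>lborel) \<partial>lborel)"
proof -
  have "(\<integral>\<^sup>+p \<in> UNIV \<times> B. f p \<partial>lborel) = (\<integral>\<^sup>+p \<in> UNIV \<times> B. f p \<partial>(lborel \<Otimes>\<^sub>M lborel))"
    by (simp add: lborel_prod)
  also have "\<dots> = (\<integral>\<^sup>+s. (\<integral>\<^sup>+y. f (y, s) * indicator (UNIV \<times> B) (y, s) \<partial>lborel) \<partial>lborel)"
    by (rule lborel_pair.nn_integral_snd[symmetric]) measurable
  finally show ?thesis
    by (simp add: indicator_times nn_integral_multc)
qed

lemma borel_measurable_heat_kernel[measurable]: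
  "(\<lambda>p. heat_kernel (fst p :: real^'n) (snd p)) \<in> borel_measurable borel"
  unfolding heat_kernel_def borel_prod[symmetric] by measurable

lemma borel_measurable_heat_kernel_comp[measurable (raw)]:
  assumes [measurable]: "f \<in> borel_measurable M" "g \<in> borel_measurable M"
  shows "(\<lambda>x. heat_kernel (f x :: real^'n) (g x)) \<in> borel_measurable M"
proof -
  have "(\<lambda>x. (f x, g x)) \<in> M \<rightarrow>\<^sub>M borel"
    unfolding borel_prod[symmetric] by measurable
  from measurable_compose[OF this borel_measurable_heat_kernel] show ?thesis
    by simp
qed

lemma heat_kernel_minus_commute: "heat_kernel (x - y) t = heat_kernel (y - x) t"
  by (simp add: heat_kernel_def norm_minus_commute)

lemma heat_kernel_powr:
  fixes x :: "real^'n"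
  assumes "t > 0"
  shows "heat_kernel x t powr (\<gamma> / real CARD('n))
    = (4 * pi * t) powr (- \<gamma> / 2) * exp (- (\<gamma> / real CARD('n) / (4 * t)) * (norm x)\<^sup>2)"
proof -
  have "heat_kernel x t powr (\<gamma> / real CARD('n))
     = ((4 * pi * t) powr (- real CARD('n) / 2)) powr (\<gamma> / real CARD('n))
       * exp (- (norm x)\<^sup>2 / (4 * t)) powr (\<gamma> / real CARD('n))"
    using assms by (simp add: heat_kernel_def powr_mult)
  also have "\<dots> = (4 * pi * t) powr (- \<gamma> / 2) * exp (- (\<gamma> / real CARD('n) / (4 * t)) * (norm x)\<^sup>2)"
    by (simp add: powr_powr exp_powr_real field_simps)
  finally show ?thesis .
qed

lemma heat_kernel_powr_le:
  fixes x :: "real^'n"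
  assumes "t > 0" "\<gamma> \<ge> 0"
  shows "heat_kernel x t powr (\<gamma> / real CARD('n)) \<le> (4 * pi * t) powr (- \<gamma> / 2)"
proof -
  have "exp (- (\<gamma> / real CARD('n) / (4 * t)) * (norm x)\<^sup>2) \<le> 1"
    using assms by simp
  then show ?thesis
    unfolding heat_kernel_powr[OF assms(1)] by (simp add: mult_left_le)
qed

lemma heat_kernel_powr_le_half_time:
  fixes x :: "real^'n"
  assumes "0 < t" "0 < \<tau>" "\<gamma> \<ge> 0" and "\<gamma> = 0 \<or> t \<le> 2 * \<tau>"
  shows "heat_kernel x \<tau> powr (\<gamma> / real CARD('n)) \<le> (2 * pi * t) powr (- \<gamma> / 2)"
  using assms(4)
proof
  assume "\<gamma> = 0"
  then show ?thesis
    using assms by (simp add: heat_kernel_def)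
next
  assume "t \<le> 2 * \<tau>"
  have "heat_kernel x \<tau> powr (\<gamma> / real CARD('n)) \<le> (4 * pi * \<tau>) powr (- \<gamma> / 2)"
    using assms by (intro heat_kernel_powr_le)
  also have "\<dots> \<le> (2 * pi * t) powr (- \<gamma> / 2)"
    using assms \<open>t \<le> 2 * \<tau>\<close> by (intro powr_mono2') auto
  finally show ?thesis .
qed

definition heat_powr_mass :: "real \<Rightarrow> real \<Rightarrow> real" where
  "heat_powr_mass n \<gamma> = (n / \<gamma>) powr (n / 2) * (4 * pi) powr ((n - \<gamma>) / 2)"

lemma heat_powr_mass_nonneg: "heat_powr_mass n \<gamma> \<ge> 0"
  by (simp add: heat_powr_mass_def)

lemma heat_powr_mass_pos: "n > 0 \<Longrightarrow> \<gamma> > 0 \<Longrightarrow> heat_powr_mass n \<gamma> > 0"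
  by (simp add: heat_powr_mass_def)

lemma gaussian_factor_eq_heat_powr_mass:
  fixes n :: nat and t \<gamma> :: real
  assumes "0 < t" "0 < \<gamma>" "0 < n"
  shows "(4 * pi * t) powr (- \<gamma> / 2) * sqrt (pi / (\<gamma> / n / (4 * t))) ^ n
    = heat_powr_mass n \<gamma> * t powr ((n - \<gamma>) / 2)"
proof -
  have "sqrt (pi / (\<gamma> / n / (4 * t))) ^ n = ((n / \<gamma>) * (4 * pi) * t) powr (n / 2)"
    using assms by (simp add: powr_half_sqrt[symmetric] powr_powr powr_realpow[symmetric]
        field_simps)
  also have "\<dots> = (n / \<gamma>) powr (n / 2) * (4 * pi) powr (n / 2) * t powr (n / 2)"
    using assms by (subst powr_mult; (subst powr_mult)?; simp)
  finally have "(4 * pi * t) powr (- \<gamma> / 2) * sqrt (pi / (\<gamma> / n / (4 * t))) ^ n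
      = (n / \<gamma>) powr (n / 2) * ((4 * pi) powr (- \<gamma> / 2) * (4 * pi) powr (n / 2))
        * (t powr (- \<gamma> / 2) * t powr (n / 2))"
    by (simp add: powr_mult)
  then show ?thesis
    by (simp add: heat_powr_mass_def powr_add[symmetric] diff_divide_distrib)
qed

lemma nn_integral_heat_kernel_powr:
  fixes z :: "real^'n" and t \<gamma> :: real
  assumes "0 < t" "0 < \<gamma>"
  shows "(\<integral>\<^sup>+y. ennreal (heat_kernel (y - z) t powr (\<gamma> / real CARD('n))) \<partial>lborel)
    = ennreal (heat_powr_mass (real CARD('n)) \<gamma> * t powr ((real CARD('n) - \<gamma>) / 2))"
proof -
  define c where "c = \<gamma> / real CARD('n) / (4 * t)"
  have "c > 0"
    using assms by (simp add: c_def)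
  let ?g = "\<lambda>u::real^'n. ennreal ((4 * pi * t) powr (- \<gamma> / 2)) * ennreal (exp (- c * (norm u)\<^sup>2))"
  have "(\<integral>\<^sup>+y. ennreal (heat_kernel (y - z) t powr (\<gamma> / real CARD('n))) \<partial>lborel)
      = (\<integral>\<^sup>+y. ?g (y - z) \<partial>lborel)"
    using assms by (intro nn_integral_cong) (simp add: heat_kernel_powr c_def ennreal_mult)
  also have "\<dots> = (\<integral>\<^sup>+u. ?g u \<partial>lborel)"
    by (rule nn_integral_lborel_translate) measurable
  also have "\<dots> = ennreal ((4 * pi * t) powr (- \<gamma> / 2)) * ennreal (sqrt (pi / c) ^ CARD('n))"
    using nn_integral_exp_neg_mult_norm_square[OF \<open>c > 0\<close>, where 'a="real^'n"]
    by (subst nn_integral_cmult) auto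
  also have "\<dots> = ennreal (heat_powr_mass (real CARD('n)) \<gamma> * t powr ((real CARD('n) - \<gamma>) / 2))"
    using assms gaussian_factor_eq_heat_powr_mass[of t \<gamma> "CARD('n)"]
    by (simp add: ennreal_mult'[symmetric] c_def)
  finally show ?thesis .
qed

lemma nn_integral_heat_kernel_powr_mult_le:
  fixes a b :: "real^'n" and \<sigma> \<tau> t \<delta> \<gamma> :: real
  assumes "0 < \<sigma>" "0 < \<tau>" "0 < t" "0 < \<delta>" "0 \<le> \<gamma>" "\<gamma> = 0 \<or> t \<le> 2 * \<tau>"
  shows "(\<integral>\<^sup>+y. ennreal (heat_kernel (y - a) \<sigma> powr (\<delta> / real CARD('n))
                        * heat_kernel (y - b) \<tau> powr (\<gamma> / real CARD('n))) \<partial>lborel)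
    \<le> ennreal ((2 * pi * t) powr (- \<gamma> / 2) * heat_powr_mass (real CARD('n)) \<delta> * \<sigma> powr ((real CARD('n) - \<delta>) / 2))"
proof -
  have "(\<integral>\<^sup>+y. ennreal (heat_kernel (y - a) \<sigma> powr (\<delta> / real CARD('n))
                        * heat_kernel (y - b) \<tau> powr (\<gamma> / real CARD('n))) \<partial>lborel)
      \<le> (\<integral>\<^sup>+y. ennreal (heat_kernel (y - a) \<sigma> powr (\<delta> / real CARD('n))) * ennreal ((2 * pi * t) powr (- \<gamma> / 2)) \<partial>lborel)"
  proof (rule nn_integral_mono)
    fix y
    have "heat_kernel (y - b) \<tau> powr (\<gamma> / real CARD('n)) \<le> (2 * pi * t) powr (- \<gamma> / 2)"
      using assms by (intro heat_kernel_powr_le_half_time)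
    then show "ennreal (heat_kernel (y - a) \<sigma> powr (\<delta> / real CARD('n))
                        * heat_kernel (y - b) \<tau> powr (\<gamma> / real CARD('n)))
        \<le> ennreal (heat_kernel (y - a) \<sigma> powr (\<delta> / real CARD('n))) * ennreal ((2 * pi * t) powr (- \<gamma> / 2))"
      by (simp add: ennreal_mult'[symmetric] mult_left_mono)
  qed
  also have "\<dots> = (\<integral>\<^sup>+y. ennreal (heat_kernel (y - a) \<sigma> powr (\<delta> / real CARD('n))) \<partial>lborel) * ennreal ((2 * pi * t) powr (- \<gamma> / 2))"
    by (rule nn_integral_multc) measurable
  also have "\<dots> = ennreal (heat_powr_mass (real CARD('n)) \<delta> * \<sigma> powr ((real CARD('n) - \<delta>) / 2) * (2 * pi * t) powr (- \<gamma> / 2))"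
    using assms by (simp add: nn_integral_heat_kernel_powr ennreal_mult'[symmetric] heat_powr_mass_nonneg)
  finally show ?thesis
    by (simp add: mult_ac)
qed

lemma nn_integral_powr_Icc:
  fixes e t :: real
  assumes "e > -1" "t \<ge> 0"
  shows "(\<integral>\<^sup>+s \<in> {0..t}. ennreal (s powr e) \<partial>lborel) = ennreal (t powr (e + 1) / (e + 1))"
  by (rule nn_integral_has_integral_lebesgue') (auto intro: has_integral_powr_from_0[OF assms])

lemma nn_integral_powr_diff_Icc:
  fixes e t :: real
  assumes "e > -1" "t \<ge> 0"
  shows "(\<integral>\<^sup>+s \<in> {0..t}. ennreal ((t - s) powr e) \<partial>lborel) = ennreal (t powr (e + 1) / (e + 1))"
proof -
  have "(\<integral>\<^sup>+s \<in> {0..t}. ennreal (s powr e) \<partial>lborel)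
     = (\<integral>\<^sup>+s. ennreal ((t + (-1) * s) powr e) * indicator {0..t} (t + (-1) * s) \<partial>lborel)"
    using nn_integral_real_affine[where f="\<lambda>s. ennreal (s powr e) * indicator {0..t} s" and c="-1" and t=t]
    by simp
  also have "\<dots> = (\<integral>\<^sup>+s \<in> {0..t}. ennreal ((t - s) powr e) \<partial>lborel)"
    by (intro nn_integral_cong) (auto simp: indicator_def)
  finally show ?thesis
    using nn_integral_powr_Icc[OF assms] by simp
qed

lemma nn_integral_Icc_powr_add:
  fixes a b e1 e2 t :: real
  assumes "0 \<le> a" "0 \<le> b" "e1 > -1" "e2 > -1" "t \<ge> 0"
  shows "(\<integral>\<^sup>+s \<in> {0..t}. ennreal (a * (t - s) powr e1 + b * s powr e2) \<partial>lborel)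
    = ennreal (a * t powr (e1 + 1) / (e1 + 1) + b * t powr (e2 + 1) / (e2 + 1))"
proof -
  have "(\<integral>\<^sup>+s \<in> {0..t}. ennreal (a * (t - s) powr e1 + b * s powr e2) \<partial>lborel)
      = (\<integral>\<^sup>+s. ennreal a * (ennreal ((t - s) powr e1) * indicator {0..t} s)
               + ennreal b * (ennreal (s powr e2) * indicator {0..t} s) \<partial>lborel)"
    using assms by (intro nn_integral_cong) (auto split: split_indicator simp: ennreal_plus ennreal_mult)
  also have "\<dots> = ennreal a * (\<integral>\<^sup>+s \<in> {0..t}. ennreal ((t - s) powr e1) \<partial>lborel)
               + ennreal b * (\<integral>\<^sup>+s \<in> {0..t}. ennreal (s powr e2) \<partial>lborel)"
    by (subst nn_integral_add) (auto simp: nn_integral_cmult)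
  also have "\<dots> = ennreal a * ennreal (t powr (e1 + 1) / (e1 + 1))
               + ennreal b * ennreal (t powr (e2 + 1) / (e2 + 1))"
    using assms by (simp add: nn_integral_powr_Icc nn_integral_powr_diff_Icc)
  finally show ?thesis
    using assms by (simp add: ennreal_mult'[symmetric])
qed

lemma nn_integral_heat_kernel_product_le:
  fixes x z :: "real^'n" and \<alpha> \<beta> s t :: real
  assumes "0 < \<alpha>" "0 \<le> \<beta>" "0 < s" "s < t"
  shows "(\<integral>\<^sup>+y. ennreal (heat_kernel (x - y) (t - s) powr (\<alpha> / real CARD('n))
                        * heat_kernel (y - z) s powr (\<beta> / real CARD('n))) \<partial>lborel)
    \<le> ennreal ((2 * pi * t) powr - (\<beta> / 2) * heat_powr_mass (real CARD('n)) \<alpha>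
                 * (t - s) powr ((real CARD('n) - \<alpha>) / 2)
             + (2 * pi * t) powr - (\<alpha> / 2) * heat_powr_mass (real CARD('n)) \<beta>
                 * s powr ((real CARD('n) - \<beta>) / 2))"
    (is "?I \<le> ennreal (?A + ?B)")
proof -
  have "?I \<le> ennreal ?A \<or> ?I \<le> ennreal ?B"
  proof (cases "\<beta> = 0 \<or> t \<le> 2 * s")
    case True
    have "?I \<le> ennreal ?A"
      using nn_integral_heat_kernel_powr_mult_le[of "t - s" s t \<alpha> \<beta> x z] assms True
      by (simp add: heat_kernel_minus_commute[of x])
    then show ?thesis ..
  next
    case False
    have "?I = (\<integral>\<^sup>+y. ennreal (heat_kernel (y - z) s powr (\<beta> / real CARD('n))
                        * heat_kernel (y - x) (t - s) powr (\<alpha> / real CARD('n))) \<partial>lborel)"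
      by (intro nn_integral_cong) (simp add: heat_kernel_minus_commute[of x] mult.commute)
    also have "\<dots> \<le> ennreal ?B"
      using nn_integral_heat_kernel_powr_mult_le[of s "t - s" t \<beta> \<alpha> z x] assms False
      by simp
    finally show ?thesis ..
  qed
  moreover have "?A \<ge> 0" "?B \<ge> 0"
    by (simp_all add: heat_powr_mass_nonneg)
  ultimately show ?thesis
    by (auto elim!: order_trans intro: ennreal_leI)
qed

lemma powr_heat_time_scaling:
  fixes t n \<alpha> \<beta> :: real
  assumes "t > 0"
  shows "(2 * pi * t) powr (- \<beta> / 2) * t powr ((n - \<alpha>) / 2 + 1)
    = (2 * pi) powr (- \<beta> / 2) / sqrt t powr (\<alpha> + \<beta> - (n + 2))"
proof -
  have "- \<beta> / 2 + ((n - \<alpha>) / 2 + 1) = - ((\<alpha> + \<beta> - (n + 2)) / 2)"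
    by (simp add: field_simps)
  then have "t powr (- \<beta> / 2) * t powr ((n - \<alpha>) / 2 + 1) = t powr (- ((\<alpha> + \<beta> - (n + 2)) / 2))"
    by (subst powr_add[symmetric]) (simp only:)
  also have "\<dots> = 1 / sqrt t powr (\<alpha> + \<beta> - (n + 2))"
    using assms by (simp add: powr_minus_divide powr_half_sqrt[symmetric] powr_powr)
  finally have "t powr (- \<beta> / 2) * t powr ((n - \<alpha>) / 2 + 1) = 1 / sqrt t powr (\<alpha> + \<beta> - (n + 2))" .
  moreover have "(2 * pi * t) powr (- \<beta> / 2) = (2 * pi) powr (- \<beta> / 2) * t powr (- \<beta> / 2)"
    by (rule powr_mult)
  ultimately show ?thesis
    by (simp only: mult.assoc) simp
qed

definition heat_product_const :: "real \<Rightarrow> real \<Rightarrow> real \<Rightarrow> real" where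
  "heat_product_const n \<alpha> \<beta> =
     (2 * pi) powr (- \<beta> / 2) * heat_powr_mass n \<alpha> / ((n - \<alpha>) / 2 + 1)
   + (2 * pi) powr (- \<alpha> / 2) * heat_powr_mass n \<beta> / ((n - \<beta>) / 2 + 1)"

lemma heat_product_const_pos:
  fixes n \<alpha> \<beta> :: real
  assumes "0 < n" "0 < \<alpha>" "\<alpha> < n + 2" "0 \<le> \<beta>" "\<beta> < n + 2"
  shows "heat_product_const n \<alpha> \<beta> > 0"
proof -
  have "(n - \<alpha>) / 2 + 1 > 0" "(n - \<beta>) / 2 + 1 > 0"
    using assms by (simp_all add: field_simps)
  then show ?thesis
    using assms unfolding heat_product_const_def
    by (intro add_pos_nonneg) (simp_all add: heat_powr_mass_pos heat_powr_mass_nonneg)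
qed

lemma nn_integral_Icc_heat_product_bound:
  fixes n \<alpha> \<beta> t :: real
  assumes "0 < t" "\<alpha> < n + 2" "\<beta> < n + 2"
  shows "(\<integral>\<^sup>+s \<in> {0..t}. ennreal ((2 * pi * t) powr - (\<beta> / 2) * heat_powr_mass n \<alpha> * (t - s) powr ((n - \<alpha>) / 2)
                         + (2 * pi * t) powr - (\<alpha> / 2) * heat_powr_mass n \<beta> * s powr ((n - \<beta>) / 2)) \<partial>lborel)
    = ennreal (heat_product_const n \<alpha> \<beta> / sqrt t powr (\<alpha> + \<beta> - (n + 2)))"
proof -
  define e1 where "e1 = (n - \<alpha>) / 2"
  define e2 where "e2 = (n - \<beta>) / 2"
  define a1 where "a1 = (2 * pi * t) powr - (\<beta> / 2) * heat_powr_mass n \<alpha>"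
  define a2 where "a2 = (2 * pi * t) powr - (\<alpha> / 2) * heat_powr_mass n \<beta>"
  have "a1 * t powr (e1 + 1) = heat_powr_mass n \<alpha> * ((2 * pi) powr (- \<beta> / 2) / sqrt t powr (\<alpha> + \<beta> - (n + 2)))"
    unfolding a1_def e1_def powr_heat_time_scaling[OF \<open>0 < t\<close>, symmetric] by (simp only: mult_ac) simp
  moreover have "a2 * t powr (e2 + 1) = heat_powr_mass n \<beta> * ((2 * pi) powr (- \<alpha> / 2) / sqrt t powr (\<alpha> + \<beta> - (n + 2)))"
    unfolding a2_def e2_def add.commute[of \<alpha> \<beta>] powr_heat_time_scaling[OF \<open>0 < t\<close>, symmetric]
    by (simp only: mult_ac) simp
  moreover have "(\<integral>\<^sup>+s \<in> {0..t}. ennreal (a1 * (t - s) powr e1 + a2 * s powr e2) \<partial>lborel)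
      = ennreal (a1 * t powr (e1 + 1) / (e1 + 1) + a2 * t powr (e2 + 1) / (e2 + 1))"
    using assms by (intro nn_integral_Icc_powr_add) (auto simp: a1_def a2_def e1_def e2_def heat_powr_mass_nonneg)
  ultimately show ?thesis
    by (simp add: a1_def a2_def e1_def e2_def heat_product_const_def add_divide_distrib mult_ac)
qed

lemma nn_integral_heat_kernel_space_time_le:
  fixes x z :: "real^'n" and \<alpha> \<beta> t :: real
  assumes "0 < \<alpha>" "\<alpha> < real CARD('n) + 2" "0 \<le> \<beta>" "\<beta> < real CARD('n) + 2" "0 < t"
  shows "(\<integral>\<^sup>+ p \<in> UNIV \<times> {0<..<t}.
        ennreal (heat_kernel (x - fst p) (t - snd p) powr (\<alpha> / real CARD('n))
               * heat_kernel (fst p - z) (snd p) powr (\<beta> / real CARD('n))) \<partial>lborel)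
      \<le> ennreal (heat_product_const (real CARD('n)) \<alpha> \<beta> / sqrt t powr (\<alpha> + \<beta> - (real CARD('n) + 2)))"
  (is "?I \<le> _")
proof -
  have "?I = (\<integral>\<^sup>+ s \<in> {0<..<t}. (\<integral>\<^sup>+ y. ennreal (heat_kernel (x - y) (t - s) powr (\<alpha> / real CARD('n))
               * heat_kernel (y - z) s powr (\<beta> / real CARD('n))) \<partial>lborel) \<partial>lborel)"
    by (subst nn_integral_lborel_times_set) auto
  also have "\<dots> \<le> (\<integral>\<^sup>+ s \<in> {0..t}.
      ennreal ((2 * pi * t) powr - (\<beta> / 2) * heat_powr_mass (real CARD('n)) \<alpha> * (t - s) powr ((real CARD('n) - \<alpha>) / 2)
             + (2 * pi * t) powr - (\<alpha> / 2) * heat_powr_mass (real CARD('n)) \<beta> * s powr ((real CARD('n) - \<beta>) / 2)) \<partial>lborel)"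
    using assms
    by (intro nn_integral_mono) (auto split: split_indicator intro!: nn_integral_heat_kernel_product_le)
  also have "\<dots> = ennreal (heat_product_const (real CARD('n)) \<alpha> \<beta> / sqrt t powr (\<alpha> + \<beta> - (real CARD('n) + 2)))"
    using assms by (intro nn_integral_Icc_heat_product_bound)
  finally show ?thesis .
qed

theorem lemma2p7:
  fixes \<alpha> \<beta> :: real
  assumes "0 < \<alpha>" "\<alpha> < real CARD('n) + 2"
      and "0 \<le> \<beta>" "\<beta> < real CARD('n) + 2"
  shows "\<exists>C>0. \<forall>(x::real^'n) z t. t > 0 \<longrightarrow>
    (\<integral>\<^sup>+ p \<in> UNIV \<times> {0<..<t}.
        ennreal (heat_kernel (x - fst p) (t - snd p) powr (\<alpha> / real CARD('n))
               * heat_kernel (fst p - z) (snd p) powr (\<beta> / real CARD('n))) \<partial>lborel)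
      \<le> ennreal (C / (sqrt t powr (\<alpha> + \<beta> - (real CARD('n) + 2))))"
  using assms heat_product_const_pos[of "real CARD('n)" \<alpha> \<beta>] nn_integral_heat_kernel_space_time_le
  by (intro exI[of _ "heat_product_const (real CARD('n)) \<alpha> \<beta>"]) auto

end
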